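(* Let $U$ and the LMC chain be as in the context and $V(x)=|x|^4+1$, $x\in\mathbb{R}^d$. For every $\eta\in(0,\alpha/(2\beta^2))$ there is a positive constant $C$ depending on $\alpha,\beta,\eta$ (not on $d$) such that $\pi_\eta(V)=\int V\,\mathrm{d}\pi_\eta\le Cd^2$.
   Context: $U:\mathbb{R}^d\to\mathbb{R}$ is five times continuously differentiable, $\nabla U(0)=0$, $\frac{\alpha}{2}|x-y|^2\le U(y)-U(x)-\langle\nabla U(x),y-x\rangle\le\frac{\beta}{2}|x-y|^2$ for all $x,y$ with $0<\alpha\le\beta$, and $\sup_x\|\nabla^kU(x)\|_{\mathrm{op}}\le M$ for $k=3,4,5$. LMC chain: $X_{k+1}=X_k-\eta\nabla U(X_k)+\sqrt{2\eta}\xi_{k+1}$ with $(\xi_k)$ i.i.d. $N(0,I_d)$ independent of $X_0$; $\pi_\eta$ denotes its stationary distribution. *)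

theory Defs
  imports "HOL-Probability.Probability"
begin

text \<open>Vectors of R^d are represented as extensional functions on the index set {..<d},
  i.e. elements of PiE {..<d} (\<lambda>_. UNIV); this lets the dimension d vary inside a formula.\<close>

definition Rd :: "nat \<Rightarrow> (nat \<Rightarrow> real) set" where
  "Rd d = PiE {..<d} (\<lambda>_. UNIV)"

definition vzero :: "nat \<Rightarrow> (nat \<Rightarrow> real)" where
  "vzero d = restrict (\<lambda>_. 0) {..<d}"

definition vdiff :: "nat \<Rightarrow> (nat \<Rightarrow> real) \<Rightarrow> (nat \<Rightarrow> real) \<Rightarrow> (nat \<Rightarrow> real)" where
  "vdiff d x y = restrict (\<lambda>i. x i - y i) {..<d}"

definition vinner :: "nat \<Rightarrow> (nat \<Rightarrow> real) \<Rightarrow> (nat \<Rightarrow> real) \<Rightarrow> real" where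
  "vinner d x y = (\<Sum>i<d. x i * y i)"

definition vnorm :: "nat \<Rightarrow> (nat \<Rightarrow> real) \<Rightarrow> real" where
  "vnorm d x = sqrt (vinner d x x)"

definition pderiv_dir :: "nat \<Rightarrow> ((nat \<Rightarrow> real) \<Rightarrow> real) \<Rightarrow> nat \<Rightarrow> (nat \<Rightarrow> real) \<Rightarrow> real" where
  "pderiv_dir d f i x = deriv (\<lambda>t. f (x(i := x i + t))) 0"

fun pdk :: "nat \<Rightarrow> ((nat \<Rightarrow> real) \<Rightarrow> real) \<Rightarrow> nat list \<Rightarrow> (nat \<Rightarrow> real) \<Rightarrow> real" where
  "pdk d f [] = f"
| "pdk d f (i # is) = pderiv_dir d (pdk d f is) i"

text \<open>Five times continuously differentiable on R^d: all partial derivatives of order \<le> 5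
  exist and are continuous (R^d carries the subspace topology of the product topology,
  which is the Euclidean topology).\<close>
definition C5_on_Rd :: "nat \<Rightarrow> ((nat \<Rightarrow> real) \<Rightarrow> real) \<Rightarrow> bool" where
  "C5_on_Rd d f \<longleftrightarrow>
     (\<forall>is. set is \<subseteq> {..<d} \<and> length is < 5 \<longrightarrow>
        (\<forall>i<d. \<forall>x\<in>Rd d. (\<lambda>t. pdk d f is (x(i := x i + t))) differentiable (at 0))) \<and>
     (\<forall>is. set is \<subseteq> {..<d} \<and> length is \<le> 5 \<longrightarrow> continuous_on (Rd d) (pdk d f is))"

definition grad :: "nat \<Rightarrow> ((nat \<Rightarrow> real) \<Rightarrow> real) \<Rightarrow> (nat \<Rightarrow> real) \<Rightarrow> (nat \<Rightarrow> real)" where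
  "grad d f x = restrict (\<lambda>i. pdk d f [i] x) {..<d}"

text \<open>Operator norm of the k-th derivative tensor at x:
  sup of |nabla^k f(x)[v_1,...,v_k]| over |v_j| \<le> 1.\<close>
definition opnorm_Dk :: "nat \<Rightarrow> nat \<Rightarrow> ((nat \<Rightarrow> real) \<Rightarrow> real) \<Rightarrow> (nat \<Rightarrow> real) \<Rightarrow> real" where
  "opnorm_Dk d k f x = (SUP vs \<in> {vs. \<forall>j<k. vs j \<in> Rd d \<and> vnorm d (vs j) \<le> 1}.
      \<bar>\<Sum>is \<in> {is. set is \<subseteq> {..<d} \<and> length is = k}. pdk d f is x * (\<Prod>j<k. vs j (is ! j))\<bar>)"

definition lmc_potential :: "nat \<Rightarrow> real \<Rightarrow> real \<Rightarrow> real \<Rightarrow> ((nat \<Rightarrow> real) \<Rightarrow> real) \<Rightarrow> bool" where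
  "lmc_potential d \<alpha> \<beta> M U \<longleftrightarrow>
     C5_on_Rd d U \<and>
     grad d U (vzero d) = vzero d \<and>
     (\<forall>x\<in>Rd d. \<forall>y\<in>Rd d.
        \<alpha> / 2 * (vnorm d (vdiff d x y))\<^sup>2 \<le> U y - U x - vinner d (grad d U x) (vdiff d y x) \<and>
        U y - U x - vinner d (grad d U x) (vdiff d y x) \<le> \<beta> / 2 * (vnorm d (vdiff d x y))\<^sup>2) \<and>
     (\<forall>k\<in>{3,4,5}. \<forall>x\<in>Rd d. opnorm_Dk d k U x \<le> M)"

definition RdM :: "nat \<Rightarrow> (nat \<Rightarrow> real) measure" where
  "RdM d = PiM {..<d} (\<lambda>_. lborel)"

definition gaussM :: "nat \<Rightarrow> (nat \<Rightarrow> real) measure" where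
  "gaussM d = PiM {..<d} (\<lambda>_. density lborel (\<lambda>x. ennreal (std_normal_density x)))"

definition lmc_step :: "nat \<Rightarrow> real \<Rightarrow> ((nat \<Rightarrow> real) \<Rightarrow> real) \<Rightarrow> (nat \<Rightarrow> real) \<Rightarrow> (nat \<Rightarrow> real) \<Rightarrow> (nat \<Rightarrow> real)" where
  "lmc_step d \<eta> U x \<xi> = restrict (\<lambda>i. x i - \<eta> * grad d U x i + sqrt (2 * \<eta>) * \<xi> i) {..<d}"

text \<open>pi is a stationary distribution of the LMC chain: if X_0 ~ pi independent of xi_1 ~ N(0,I_d),
  then X_1 ~ pi.\<close>
definition lmc_stationary :: "nat \<Rightarrow> real \<Rightarrow> ((nat \<Rightarrow> real) \<Rightarrow> real) \<Rightarrow> (nat \<Rightarrow> real) measure \<Rightarrow> bool" where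
  "lmc_stationary d \<eta> U \<pi> \<longleftrightarrow>
     prob_space \<pi> \<and> sets \<pi> = sets (RdM d) \<and>
     distr (\<pi> \<Otimes>\<^sub>M gaussM d) (RdM d) (\<lambda>(x, \<xi>). lmc_step d \<eta> U x \<xi>) = \<pi>"

end

theory Submission
  imports Defs
begin

text \<open>
  Strong convexity and smoothness together with \<nabla>U(0) = 0 give
  \<langle>\<nabla>U(x), x\<rangle> \<ge> \<alpha>|x|^2 and |\<nabla>U(x)| \<le> \<beta>|x|, so the gradient step
  x - \<eta>\<nabla>U(x) shrinks |x|^2 by the factor Q = 1 - 2\<eta>\<alpha> + \<eta>^2\<beta>^2 < 1.
  Two applications of (u + v)^2 \<le> (1 + c)u^2 + (1 + 1/c)v^2 turn this into the drift
  inequality V(X_1) \<le> \<rho> V(X_0) + K d \<Sum>_i \<xi>_i^4 + 1 with \<rho> = (1 + c)^3 Q^2 < 1,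
  and E \<Sum>_i \<xi>_i^4 = 3d. Integrating against the stationary law gives
  (1 - \<rho>) \<pi>(V) \<le> 3Kd^2 + 1. As \<pi>(V) is not known to be finite beforehand, the
  integration is done for the truncations min(V, n), followed by monotone convergence.
\<close>

lemma vinner_vdiff_left: "vinner d (vdiff d x y) w = vinner d x w - vinner d y w"
  by (simp add: vinner_def vdiff_def sum_subtractf left_diff_distrib)

lemma vinner_vdiff_right: "vinner d w (vdiff d x y) = vinner d w x - vinner d w y"
  by (simp add: vinner_def vdiff_def sum_subtractf right_diff_distrib)

lemma vinner_vzero_left [simp]: "vinner d (vzero d) w = 0"
  by (simp add: vinner_def vzero_def)

lemma vinner_vzero_right [simp]: "vinner d w (vzero d) = 0"
  by (simp add: vinner_def vzero_def)

lemma vinner_self_nonneg: "0 \<le> vinner d x x"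
  by (simp add: vinner_def sum_nonneg)

lemma vnorm_power2: "(vnorm d x)\<^sup>2 = vinner d x x"
  by (simp add: vnorm_def vinner_self_nonneg)

lemma vnorm_power4: "(vnorm d x) ^ 4 = (vinner d x x)\<^sup>2"
  by (simp flip: vnorm_power2 power_mult)

lemma restrict_in_Rd [simp]: "restrict f {..<d} \<in> Rd d"
  by (simp add: Rd_def)

lemma vdiff_in_Rd [simp]: "vdiff d x y \<in> Rd d"
  by (simp add: vdiff_def)

lemma vzero_in_Rd [simp]: "vzero d \<in> Rd d"
  by (simp add: vzero_def)

lemma power2_add_le_weighted:
  fixes u v c :: real
  assumes "0 < c"
  shows "(u + v)\<^sup>2 \<le> (1 + c) * u\<^sup>2 + (1 + 1 / c) * v\<^sup>2"
proof -
  have "0 \<le> (c * u - v)\<^sup>2 / c" using assms by simp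
  also have "(c * u - v)\<^sup>2 / c = c * u\<^sup>2 - 2 * u * v + v\<^sup>2 / c"
    using assms by (simp add: power2_eq_square field_simps)
  finally show ?thesis by (simp add: power2_eq_square algebra_simps add_divide_distrib)
qed

lemma ex_pos_cube_times_square_lt_one:
  fixes Q :: real
  assumes "0 \<le> Q" and "Q < 1"
  shows "\<exists>c>0. (1 + c) ^ 3 * Q\<^sup>2 < 1"
proof (intro exI conjI)
  define c where "c = (1 - Q) / 7"
  show "0 < c" using assms by (simp add: c_def)
  have "c \<le> 1" using assms by (simp add: c_def)
  have "(1 + c) ^ 3 = 1 + 3 * c + 3 * c\<^sup>2 + c ^ 3"
    by (simp add: power3_eq_cube power2_eq_square algebra_simps)
  also have "\<dots> \<le> 1 + 7 * c"
  proof -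
    have "c * c \<le> c" using \<open>0 < c\<close> \<open>c \<le> 1\<close> by (simp add: mult_le_cancel_left1)
    moreover have "c * c * c \<le> c * c" using \<open>0 < c\<close> \<open>c \<le> 1\<close> by (simp add: mult_right_le_one_le)
    ultimately show ?thesis by (simp add: power3_eq_cube power2_eq_square)
  qed
  finally have "(1 + c) ^ 3 * Q\<^sup>2 \<le> (1 + 7 * c) * Q"
    using assms \<open>0 < c\<close> by (intro mult_mono) (auto simp: power2_eq_square mult_left_le_one_le)
  also have "\<dots> = (2 - Q) * Q"
    by (simp add: c_def)
  also have "\<dots> = 1 - (1 - Q)\<^sup>2"
    by (simp add: power2_eq_square algebra_simps)
  also have "\<dots> < 1" using assms by simp
  finally show "(1 + c) ^ 3 * Q\<^sup>2 < 1" .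
qed

lemma lmc_potential_Bregman_bounds:
  assumes "lmc_potential d \<alpha> \<beta> M U" and "x \<in> Rd d" and "y \<in> Rd d"
  shows "\<alpha> / 2 * vinner d (vdiff d x y) (vdiff d x y) \<le> U y - U x - vinner d (grad d U x) (vdiff d y x)"
    and "U y - U x - vinner d (grad d U x) (vdiff d y x) \<le> \<beta> / 2 * vinner d (vdiff d x y) (vdiff d x y)"
  using assms unfolding lmc_potential_def vnorm_power2 by auto

lemma lmc_potential_grad_vzero: "lmc_potential d \<alpha> \<beta> M U \<Longrightarrow> grad d U (vzero d) = vzero d"
  by (simp add: lmc_potential_def)

lemma lmc_potential_quadratic_growth:
  assumes "lmc_potential d \<alpha> \<beta> M U" and "x \<in> Rd d"
  shows "\<alpha> / 2 * vinner d x x \<le> U x - U (vzero d)"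
    and "U x - U (vzero d) \<le> \<beta> / 2 * vinner d x x"
  using lmc_potential_Bregman_bounds[OF assms(1) vzero_in_Rd assms(2)]
  by (simp_all add: lmc_potential_grad_vzero[OF assms(1)] vinner_vdiff_left vinner_vdiff_right)

lemma lmc_potential_grad_inner_ge:
  assumes "lmc_potential d \<alpha> \<beta> M U" and "x \<in> Rd d"
  shows "\<alpha> * vinner d x x \<le> vinner d (grad d U x) x"
  using lmc_potential_Bregman_bounds(1)[OF assms vzero_in_Rd]
    lmc_potential_quadratic_growth(1)[OF assms]
  by (simp add: vinner_vdiff_left vinner_vdiff_right)

lemma lmc_potential_grad_norm_le:
  assumes P: "lmc_potential d \<alpha> \<beta> M U" and x: "x \<in> Rd d" and "0 \<le> \<alpha>" and "0 < \<beta>"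
  shows "vinner d (grad d U x) (grad d U x) \<le> \<beta>\<^sup>2 * vinner d x x"
proof -
  let ?g = "grad d U x"
  \<comment> \<open>Compare U at z = x - \<nabla>U(x)/\<beta>, the smoothness minimiser around x, with its minimum U(0).\<close>
  define z where "z = vdiff d x (restrict (\<lambda>i. ?g i / \<beta>) {..<d})"
  have "0 \<le> \<alpha> / 2 * vinner d z z"
    using \<open>0 \<le> \<alpha>\<close> by (simp add: vinner_self_nonneg)
  then have "0 \<le> U z - U (vzero d)"
    using lmc_potential_quadratic_growth(1)[OF P, of z] by (simp add: z_def)
  moreover have "U z - U x + vinner d ?g ?g / \<beta> \<le> \<beta> / 2 * (vinner d ?g ?g / \<beta>\<^sup>2)"
  proof -
    have "vinner d (vdiff d x z) (vdiff d x z) = vinner d ?g ?g / \<beta>\<^sup>2"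
      by (simp add: z_def vinner_def vdiff_def sum_divide_distrib power2_eq_square)
    moreover have "vinner d ?g (vdiff d z x) = - (vinner d ?g ?g / \<beta>)"
      by (simp add: z_def vinner_def vdiff_def sum_divide_distrib sum_negf)
    ultimately show ?thesis
      using lmc_potential_Bregman_bounds(2)[OF P x, of z] by (simp add: z_def)
  qed
  ultimately have "vinner d ?g ?g / \<beta> \<le> \<beta> / 2 * (vinner d ?g ?g / \<beta>\<^sup>2) + \<beta> / 2 * vinner d x x"
    using lmc_potential_quadratic_growth(2)[OF P x] by linarith
  also have "\<beta> / 2 * (vinner d ?g ?g / \<beta>\<^sup>2) = vinner d ?g ?g / \<beta> / 2"
    using \<open>0 < \<beta>\<close> by (simp add: power2_eq_square field_simps)
  finally have "vinner d ?g ?g / \<beta> \<le> \<beta> * vinner d x x" by simp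
  then show ?thesis
    using \<open>0 < \<beta>\<close> by (simp add: field_simps power2_eq_square)
qed

definition lmc_contraction :: "real \<Rightarrow> real \<Rightarrow> real \<Rightarrow> real" where
  "lmc_contraction \<alpha> \<beta> \<eta> = 1 - 2 * \<eta> * \<alpha> + \<eta>\<^sup>2 * \<beta>\<^sup>2"

lemma lmc_contraction_nonneg:
  assumes "\<alpha> \<le> \<beta>" and "0 \<le> \<eta>"
  shows "0 \<le> lmc_contraction \<alpha> \<beta> \<eta>"
proof -
  have "lmc_contraction \<alpha> \<beta> \<eta> = (1 - \<eta> * \<beta>)\<^sup>2 + 2 * \<eta> * (\<beta> - \<alpha>)"
    by (simp add: lmc_contraction_def power2_eq_square algebra_simps)
  then show ?thesis using assms by simp
qed

lemma lmc_contraction_less_one: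
  assumes "0 < \<eta>" and "\<eta> * \<beta>\<^sup>2 < 2 * \<alpha>"
  shows "lmc_contraction \<alpha> \<beta> \<eta> < 1"
proof -
  have "\<eta> * (\<eta> * \<beta>\<^sup>2) < \<eta> * (2 * \<alpha>)" using assms by simp
  then show ?thesis by (simp add: lmc_contraction_def power2_eq_square algebra_simps)
qed

lemma gradient_step_contraction:
  assumes P: "lmc_potential d \<alpha> \<beta> M U" and x: "x \<in> Rd d"
    and "0 \<le> \<alpha>" and "0 < \<beta>" and "0 \<le> \<eta>"
  shows "(\<Sum>i<d. (x i - \<eta> * grad d U x i)\<^sup>2) \<le> lmc_contraction \<alpha> \<beta> \<eta> * vinner d x x"
proof -
  let ?g = "grad d U x"
  have "(\<Sum>i<d. (x i - \<eta> * ?g i)\<^sup>2) = vinner d x x - 2 * \<eta> * vinner d ?g x + \<eta>\<^sup>2 * vinner d ?g ?g"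
    by (simp add: vinner_def power2_eq_square algebra_simps sum.distrib sum_subtractf sum_distrib_left)
  moreover have "\<eta> * (\<alpha> * vinner d x x) \<le> \<eta> * vinner d ?g x"
    using lmc_potential_grad_inner_ge[OF P x] \<open>0 \<le> \<eta>\<close> by (rule mult_left_mono)
  moreover have "\<eta>\<^sup>2 * vinner d ?g ?g \<le> \<eta>\<^sup>2 * (\<beta>\<^sup>2 * vinner d x x)"
    using lmc_potential_grad_norm_le[OF P x \<open>0 \<le> \<alpha>\<close> \<open>0 < \<beta>\<close>] by (simp add: mult_left_mono)
  ultimately show ?thesis
    by (simp add: lmc_contraction_def algebra_simps)
qed

lemma lmc_step_vinner_le:
  fixes \<xi> :: "nat \<Rightarrow> real"
  assumes P: "lmc_potential d \<alpha> \<beta> M U" and x: "x \<in> Rd d"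
    and "0 \<le> \<alpha>" and "0 < \<beta>" and "0 \<le> \<eta>" and "0 < c"
  defines "y \<equiv> lmc_step d \<eta> U x \<xi>"
  shows "vinner d y y \<le> (1 + c) * (lmc_contraction \<alpha> \<beta> \<eta> * vinner d x x) + (1 + 1 / c) * (2 * \<eta> * vinner d \<xi> \<xi>)"
proof -
  let ?g = "grad d U x"
  have "vinner d y y = (\<Sum>i<d. ((x i - \<eta> * ?g i) + sqrt (2 * \<eta>) * \<xi> i)\<^sup>2)"
    by (simp add: y_def vinner_def lmc_step_def power2_eq_square)
  also have "\<dots> \<le> (\<Sum>i<d. (1 + c) * (x i - \<eta> * ?g i)\<^sup>2 + (1 + 1 / c) * (sqrt (2 * \<eta>) * \<xi> i)\<^sup>2)"
    by (intro sum_mono power2_add_le_weighted \<open>0 < c\<close>)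
  also have "\<dots> = (1 + c) * (\<Sum>i<d. (x i - \<eta> * ?g i)\<^sup>2) + (1 + 1 / c) * (2 * \<eta> * vinner d \<xi> \<xi>)"
  proof -
    have "(sqrt (2 * \<eta>) * \<xi> i)\<^sup>2 = 2 * \<eta> * (\<xi> i * \<xi> i)" for i
      using \<open>0 \<le> \<eta>\<close> by (simp add: power_mult_distrib power2_eq_square)
    then show ?thesis by (simp add: vinner_def sum.distrib sum_distrib_left mult.assoc)
  qed
  also have "\<dots> \<le> (1 + c) * (lmc_contraction \<alpha> \<beta> \<eta> * vinner d x x) + (1 + 1 / c) * (2 * \<eta> * vinner d \<xi> \<xi>)"
    using gradient_step_contraction[OF assms(1-5)] \<open>0 < c\<close> by simp
  finally show ?thesis .
qed

lemma lmc_step_fourth_power_drift: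
  assumes P: "lmc_potential d \<alpha> \<beta> M U" and x: "x \<in> Rd d"
    and "0 \<le> \<alpha>" and "\<alpha> \<le> \<beta>" and "0 < \<beta>" and "0 \<le> \<eta>" and "0 < c"
  defines "Q \<equiv> lmc_contraction \<alpha> \<beta> \<eta>"
  shows "(vnorm d (lmc_step d \<eta> U x \<xi>)) ^ 4 + 1 \<le>
     (1 + c) ^ 3 * Q\<^sup>2 * ((vnorm d x) ^ 4 + 1)
       + ((1 + 1 / c) ^ 3 * (2 * \<eta>)\<^sup>2 * real d * (\<Sum>i<d. (\<xi> i) ^ 4) + 1)"
proof -
  define A where "A = (1 + c) * (Q * vinner d x x)"
  define B where "B = (1 + 1 / c) * (2 * \<eta> * vinner d \<xi> \<xi>)"
  have "0 \<le> A" "0 \<le> B"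
    using \<open>0 < c\<close> \<open>0 \<le> \<eta>\<close> lmc_contraction_nonneg[OF \<open>\<alpha> \<le> \<beta>\<close> \<open>0 \<le> \<eta>\<close>] vinner_self_nonneg
    by (simp_all add: A_def B_def Q_def)
  have "(vnorm d (lmc_step d \<eta> U x \<xi>)) ^ 4 \<le> (A + B)\<^sup>2"
    unfolding vnorm_power4 A_def B_def Q_def
    using lmc_step_vinner_le[OF P x \<open>0 \<le> \<alpha>\<close> \<open>0 < \<beta>\<close> \<open>0 \<le> \<eta>\<close> \<open>0 < c\<close>]
    by (intro power_mono) (simp_all add: vinner_self_nonneg)
  also have "\<dots> \<le> (1 + c) * A\<^sup>2 + (1 + 1 / c) * B\<^sup>2"
    using \<open>0 < c\<close> by (rule power2_add_le_weighted)
  also have "\<dots> = (1 + c) ^ 3 * Q\<^sup>2 * (vnorm d x) ^ 4 + (1 + 1 / c) ^ 3 * (2 * \<eta>)\<^sup>2 * (vinner d \<xi> \<xi>)\<^sup>2"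
    by (simp add: A_def B_def vnorm_power4 power2_eq_square power3_eq_cube)
  also have "\<dots> \<le> (1 + c) ^ 3 * Q\<^sup>2 * (vnorm d x) ^ 4 + (1 + 1 / c) ^ 3 * (2 * \<eta>)\<^sup>2 * (real d * (\<Sum>i<d. (\<xi> i) ^ 4))"
  proof -
    have "(vinner d \<xi> \<xi>)\<^sup>2 = (\<Sum>i<d. (\<xi> i)\<^sup>2)\<^sup>2"
      by (simp add: vinner_def power2_eq_square)
    also have "\<dots> \<le> real d * (\<Sum>i<d. (\<xi> i) ^ 4)"
      using sum_squared_le_sum_of_squares[of "\<lambda>i. (\<xi> i)\<^sup>2" "{..<d}"]
      by (simp add: mult.commute flip: power_mult)
    finally show ?thesis using \<open>0 < c\<close> by (simp add: mult_left_mono)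
  qed
  moreover have "0 \<le> (1 + c) ^ 3 * Q\<^sup>2" using \<open>0 < c\<close> by simp
  ultimately show ?thesis by (simp add: algebra_simps)
qed

lemma nn_integral_le_of_truncated_contraction:
  fixes V :: "'a \<Rightarrow> real"
  assumes "finite_measure M" and V: "V \<in> borel_measurable M" "\<And>x. 0 \<le> V x"
    and "0 \<le> \<rho>" and "\<rho> < 1"
    and truncated: "\<And>n::nat. (\<integral>\<^sup>+ x. min (V x) (real n) \<partial>M) \<le> (\<integral>\<^sup>+ x. min (\<rho> * V x) (real n) \<partial>M) + ennreal b"
  shows "(\<integral>\<^sup>+ x. V x \<partial>M) \<le> ennreal (b / (1 - \<rho>))"
proof -
  interpret finite_measure M by fact
  define gap where "gap n x = min (V x) (real n) - min (\<rho> * V x) (real n)" for n x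
  have shrink: "0 \<le> \<rho> * V x \<and> \<rho> * V x \<le> V x" for x
    using V(2)[of x] \<open>0 \<le> \<rho>\<close> \<open>\<rho> < 1\<close> by (simp add: mult_left_le_one_le)
  have gap_nonneg: "0 \<le> gap n x" for n x
    using shrink[of x] unfolding gap_def by linarith
  have gap_bound: "(\<integral>\<^sup>+ x. gap n x \<partial>M) \<le> ennreal b" for n
  proof -
    have "(\<integral>\<^sup>+ x. min (V x) (real n) \<partial>M) = (\<integral>\<^sup>+ x. min (\<rho> * V x) (real n) \<partial>M) + (\<integral>\<^sup>+ x. gap n x \<partial>M)"
      using V gap_nonneg \<open>0 \<le> \<rho>\<close> unfolding gap_def
      by (subst nn_integral_add[symmetric]) (auto intro!: nn_integral_cong simp flip: ennreal_plus)
    moreover have "(\<integral>\<^sup>+ x. min (\<rho> * V x) (real n) \<partial>M) \<noteq> \<top>"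
    proof -
      have "(\<integral>\<^sup>+ x. min (\<rho> * V x) (real n) \<partial>M) \<le> (\<integral>\<^sup>+ x. real n \<partial>M)"
        by (intro nn_integral_mono) simp
      moreover have "(\<integral>\<^sup>+ x. real n \<partial>M) \<noteq> \<top>"
        by (simp add: ennreal_mult_eq_top_iff)
      ultimately show ?thesis by (rule neq_top_trans[rotated])
    qed
    ultimately show ?thesis using truncated[of n] by (simp add: ennreal_add_left_cancel_le)
  qed
  have gap_incseq: "incseq (\<lambda>n x. ennreal (gap n x))"
  proof (intro monoI le_funI ennreal_leI)
    fix m n :: nat and x assume "m \<le> n"
    then show "gap m x \<le> gap n x"
      using shrink[of x] by (auto simp: gap_def min_def)
  qed
  have gap_SUP: "(SUP n. ennreal (gap n x)) = ennreal ((1 - \<rho>) * V x)" for x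
  proof (rule antisym)
    show "(SUP n. ennreal (gap n x)) \<le> ennreal ((1 - \<rho>) * V x)"
      using shrink[of x] by (intro SUP_least ennreal_leI) (auto simp: gap_def min_def algebra_simps)
    have "gap n x = (1 - \<rho>) * V x" if "V x \<le> real n" for n
      using shrink[of x] that by (auto simp: gap_def min_def algebra_simps)
    then have "gap (nat \<lceil>V x\<rceil>) x = (1 - \<rho>) * V x"
      using real_nat_ceiling_ge by blast
    then show "ennreal ((1 - \<rho>) * V x) \<le> (SUP n. ennreal (gap n x))"
      by (metis UNIV_I SUP_upper)
  qed
  have "ennreal (1 - \<rho>) * (\<integral>\<^sup>+ x. V x \<partial>M) = (\<integral>\<^sup>+ x. ennreal ((1 - \<rho>) * V x) \<partial>M)"
    using V \<open>\<rho> < 1\<close> by (subst nn_integral_cmult[symmetric]) (auto simp: ennreal_mult)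
  also have "\<dots> = (SUP n. \<integral>\<^sup>+ x. gap n x \<partial>M)"
    using V(1) unfolding gap_SUP[symmetric]
    by (intro nn_integral_monotone_convergence_SUP gap_incseq) (simp add: gap_def)
  also have "\<dots> \<le> ennreal b"
    by (intro SUP_least gap_bound)
  finally have scaled: "ennreal (1 - \<rho>) * (\<integral>\<^sup>+ x. V x \<partial>M) \<le> ennreal b" .
  have "(\<integral>\<^sup>+ x. V x \<partial>M) = ennreal (1 / (1 - \<rho>)) * (ennreal (1 - \<rho>) * (\<integral>\<^sup>+ x. V x \<partial>M))"
    using \<open>\<rho> < 1\<close> by (simp add: mult.assoc[symmetric] ennreal_mult[symmetric])
  also have "\<dots> \<le> ennreal (1 / (1 - \<rho>)) * ennreal b"
    using scaled by (rule mult_left_mono) simp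
  also have "\<dots> = ennreal (b / (1 - \<rho>))"
    using \<open>\<rho> < 1\<close> ennreal_mult''[of "1 / (1 - \<rho>)" b] by (simp add: mult.commute)
  finally show ?thesis .
qed

lemma stationary_truncated_drift:
  fixes V :: "'a \<Rightarrow> real" and W :: "'b \<Rightarrow> real" and f :: "'a \<times> 'b \<Rightarrow> 'a"
  assumes "prob_space \<pi>" and "prob_space G"
    and f: "f \<in> measurable (\<pi> \<Otimes>\<^sub>M G) \<pi>" and stationary: "distr (\<pi> \<Otimes>\<^sub>M G) \<pi> f = \<pi>"
    and V: "V \<in> borel_measurable \<pi>" "\<And>x. 0 \<le> V x"
    and W: "W \<in> borel_measurable G" "\<And>\<xi>. 0 \<le> W \<xi>" "(\<integral>\<^sup>+ \<xi>. W \<xi> \<partial>G) = ennreal b"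
    and drift: "\<And>x \<xi>. x \<in> space \<pi> \<Longrightarrow> \<xi> \<in> space G \<Longrightarrow> V (f (x, \<xi>)) \<le> \<rho> * V x + W \<xi>"
    and "0 \<le> \<rho>" and "0 \<le> N"
  shows "(\<integral>\<^sup>+ x. min (V x) N \<partial>\<pi>) \<le> (\<integral>\<^sup>+ x. min (\<rho> * V x) N \<partial>\<pi>) + ennreal b"
proof -
  interpret \<pi>: prob_space \<pi> by fact
  interpret G: prob_space G by fact
  have "(\<integral>\<^sup>+ x. min (V x) N \<partial>\<pi>) = (\<integral>\<^sup>+ z. min (V (f z)) N \<partial>(\<pi> \<Otimes>\<^sub>M G))"
    using V(1) by (subst (1) stationary[symmetric]) (simp add: nn_integral_distr[OF f])
  also have "\<dots> = (\<integral>\<^sup>+ x. \<integral>\<^sup>+ \<xi>. min (V (f (x, \<xi>))) N \<partial>G \<partial>\<pi>)"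
    using f V(1) by (subst G.nn_integral_fst[symmetric]) auto
  also have "\<dots> \<le> (\<integral>\<^sup>+ x. \<integral>\<^sup>+ \<xi>. ennreal (min (\<rho> * V x) N) + W \<xi> \<partial>G \<partial>\<pi>)"
  proof (intro nn_integral_mono)
    fix x \<xi> assume "x \<in> space \<pi>" "\<xi> \<in> space G"
    then have "min (V (f (x, \<xi>))) N \<le> min (\<rho> * V x) N + W \<xi>"
      using drift[of x \<xi>] W(2)[of \<xi>] by linarith
    then have "ennreal (min (V (f (x, \<xi>))) N) \<le> ennreal (min (\<rho> * V x) N + W \<xi>)"
      by (rule ennreal_leI)
    also have "\<dots> = ennreal (min (\<rho> * V x) N) + W \<xi>"
      using W(2)[of \<xi>] V(2)[of x] \<open>0 \<le> \<rho>\<close> \<open>0 \<le> N\<close> by (intro ennreal_plus) auto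
    finally show "ennreal (min (V (f (x, \<xi>))) N) \<le> ennreal (min (\<rho> * V x) N) + W \<xi>" .
  qed
  also have "\<dots> = (\<integral>\<^sup>+ x. min (\<rho> * V x) N \<partial>\<pi>) + b"
    using V(1) W by (simp add: nn_integral_add G.emeasure_space_1 \<pi>.emeasure_space_1)
  finally show ?thesis .
qed

lemma prob_space_std_normal: "prob_space (density lborel (\<lambda>x. ennreal (std_normal_density x)))"
  using prob_space_normal_density[of 1 0] by simp

lemma prob_space_gaussM: "prob_space (gaussM d)"
  unfolding gaussM_def by (intro prob_space_PiM prob_space_std_normal)

lemma nn_integral_std_normal_power4:
  "(\<integral>\<^sup>+ x. ennreal (x ^ 4) \<partial>density lborel (\<lambda>x. ennreal (std_normal_density x))) = 3"
proof -
  have "(\<integral>\<^sup>+ x. ennreal (x ^ 4) \<partial>density lborel (\<lambda>x. ennreal (std_normal_density x)))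
      = (\<integral>\<^sup>+ x. ennreal (std_normal_density x * x ^ (2 * 2)) \<partial>lborel)"
    by (subst nn_integral_density) (auto intro!: nn_integral_cong simp: ennreal_mult)
  also have "\<dots> = ennreal (\<integral> x. std_normal_density x * x ^ (2 * 2) \<partial>lborel)"
    by (intro nn_integral_eq_integral integrable_std_normal_moment) auto
  also have "(\<integral> x. std_normal_density x * x ^ (2 * 2) \<partial>lborel) = 3"
    by (subst integral_std_normal_moment_even) (simp add: fact_numeral)
  finally show ?thesis by simp
qed

lemma nn_integral_gaussM_component_power4:
  assumes "i < d"
  shows "(\<integral>\<^sup>+ \<xi>. ennreal ((\<xi> i) ^ 4) \<partial>gaussM d) = 3"
proof -
  have "distr (gaussM d) (density lborel (\<lambda>x. ennreal (std_normal_density x))) (\<lambda>\<xi>. \<xi> i)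
      = density lborel (\<lambda>x. ennreal (std_normal_density x))"
    unfolding gaussM_def using assms by (intro distr_PiM_component prob_space_std_normal) auto
  moreover have "(\<integral>\<^sup>+ \<xi>. ennreal ((\<xi> i) ^ 4) \<partial>gaussM d)
      = (\<integral>\<^sup>+ x. ennreal (x ^ 4) \<partial>distr (gaussM d) (density lborel (\<lambda>x. ennreal (std_normal_density x))) (\<lambda>\<xi>. \<xi> i))"
    unfolding gaussM_def using assms by (subst nn_integral_distr) auto
  ultimately show ?thesis
    using nn_integral_std_normal_power4 by simp
qed

lemma nn_integral_gaussM_fourth_moments:
  fixes K :: real
  assumes "0 \<le> K"
  shows "(\<integral>\<^sup>+ \<xi>. ennreal (K * (\<Sum>i<d. (\<xi> i) ^ 4) + 1) \<partial>gaussM d) = ennreal (3 * K * real d + 1)"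
proof -
  interpret G: prob_space "gaussM d" by (rule prob_space_gaussM)
  have meas: "\<And>i. i < d \<Longrightarrow> (\<lambda>\<xi>. ennreal ((\<xi> i) ^ 4)) \<in> borel_measurable (gaussM d)"
    unfolding gaussM_def by measurable
  have "(\<integral>\<^sup>+ \<xi>. ennreal (K * (\<Sum>i<d. (\<xi> i) ^ 4) + 1) \<partial>gaussM d)
      = (\<integral>\<^sup>+ \<xi>. ennreal K * (\<Sum>i<d. ennreal ((\<xi> i) ^ 4)) + 1 \<partial>gaussM d)"
    using assms by (intro nn_integral_cong) (simp add: ennreal_mult[symmetric] sum_nonneg)
  also have "\<dots> = ennreal K * (\<Sum>i<d. \<integral>\<^sup>+ \<xi>. ennreal ((\<xi> i) ^ 4) \<partial>gaussM d) + 1"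
  proof -
    have "(\<integral>\<^sup>+ \<xi>. (\<Sum>i<d. ennreal ((\<xi> i) ^ 4)) \<partial>gaussM d) = (\<Sum>i<d. \<integral>\<^sup>+ \<xi>. ennreal ((\<xi> i) ^ 4) \<partial>gaussM d)"
      using meas by (intro nn_integral_sum) auto
    then show ?thesis
      using meas by (simp add: nn_integral_add nn_integral_cmult G.emeasure_space_1 del: sum_ennreal)
  qed
  also have "\<dots> = ennreal (3 * K * real d + 1)"
    using assms
    by (simp add: nn_integral_gaussM_component_power4 ennreal_of_nat_eq_real_of_nat
        ennreal_mult'' ennreal_mult mult_ac)
  finally show ?thesis .
qed

lemma space_RdM: "space (RdM d) = Rd d"
  by (simp add: RdM_def Rd_def space_PiM)

lemma measurable_RdM_component: "i < d \<Longrightarrow> (\<lambda>x. x i) \<in> borel_measurable (RdM d)"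
  unfolding RdM_def by simp

lemma borel_measurable_RdM_continuous_on:
  assumes "continuous_on (Rd d) f"
  shows "f \<in> borel_measurable (RdM d)"
proof -
  let ?r = "\<lambda>y::nat \<Rightarrow> real. restrict y {..<d}"
  have "continuous_on UNIV ?r"
  proof (intro continuous_on_coordinatewise_then_product)
    fix i
    show "continuous_on UNIV (\<lambda>y::nat \<Rightarrow> real. restrict y {..<d} i)"
      by (cases "i < d") simp_all
  qed
  then have "continuous_on UNIV (f \<circ> ?r)"
    by (rule continuous_on_compose) (rule continuous_on_subset[OF assms], auto)
  then have "f \<circ> ?r \<in> borel_measurable borel"
    by (rule borel_measurable_continuous_onI)
  moreover have "(\<lambda>x. x) \<in> measurable (RdM d) (borel :: (nat \<Rightarrow> real) measure)"
  proof (rule measurable_coordinatewise_then_product)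
    fix i
    show "(\<lambda>x. x i) \<in> borel_measurable (RdM d)"
    proof (cases "i < d")
      case True
      then show ?thesis by (rule measurable_RdM_component)
    next
      case False
      then have "x i = undefined" if "x \<in> space (RdM d)" for x
        using that by (auto simp: space_RdM Rd_def PiE_def extensional_def)
      then show ?thesis by (subst measurable_cong[where g = "\<lambda>_. undefined"]) auto
    qed
  qed
  ultimately have "(f \<circ> ?r) \<circ> (\<lambda>x. x) \<in> borel_measurable (RdM d)"
    by (rule measurable_comp[rotated])
  moreover have "((f \<circ> ?r) \<circ> (\<lambda>x. x)) x = f x" if "x \<in> space (RdM d)" for x
    using that by (auto simp: space_RdM Rd_def PiE_def extensional_restrict)
  ultimately show ?thesis by (rule measurable_cong[THEN iffD1, rotated])
qed

lemma borel_measurable_vnorm: "vnorm d \<in> borel_measurable (RdM d)"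
proof -
  have "(\<lambda>x. \<Sum>i<d. x i * x i) \<in> borel_measurable (RdM d)"
    using measurable_RdM_component[of _ d] by (intro borel_measurable_sum borel_measurable_times) auto
  then have "(\<lambda>x. sqrt (\<Sum>i<d. x i * x i)) \<in> borel_measurable (RdM d)"
    by measurable
  then show ?thesis unfolding vnorm_def vinner_def by (simp add: fun_eq_iff[symmetric])
qed

lemma measurable_lmc_step:
  assumes "C5_on_Rd d U"
  shows "(\<lambda>(x, \<xi>). lmc_step d \<eta> U x \<xi>) \<in> measurable (RdM d \<Otimes>\<^sub>M gaussM d) (RdM d)"
proof -
  have continuous: "continuous_on (Rd d) (pdk d U is)" if "set is \<subseteq> {..<d}" "length is \<le> 5" for "is"
    using assms that unfolding C5_on_Rd_def by blast
  have coordinate: "(\<lambda>z. fst z i - \<eta> * pdk d U [i] (fst z) + sqrt (2 * \<eta>) * snd z i)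
      \<in> borel_measurable (RdM d \<Otimes>\<^sub>M gaussM d)" if "i < d" for i
  proof -
    have "pdk d U [i] \<in> borel_measurable (RdM d)"
      using that by (intro borel_measurable_RdM_continuous_on continuous) auto
    then have "(\<lambda>z. pdk d U [i] (fst z)) \<in> borel_measurable (RdM d \<Otimes>\<^sub>M gaussM d)"
      by (rule measurable_compose[OF measurable_fst])
    moreover have "(\<lambda>z. fst z i) \<in> borel_measurable (RdM d \<Otimes>\<^sub>M gaussM d)"
      using measurable_RdM_component[OF that] by (rule measurable_compose[OF measurable_fst])
    moreover have "(\<lambda>\<xi>. \<xi> i) \<in> borel_measurable (gaussM d)"
      using that unfolding gaussM_def by simp
    then have "(\<lambda>z. snd z i) \<in> borel_measurable (RdM d \<Otimes>\<^sub>M gaussM d)"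
      by (rule measurable_compose[OF measurable_snd])
    ultimately show ?thesis by simp
  qed
  have "(\<lambda>z. restrict (\<lambda>i. fst z i - \<eta> * pdk d U [i] (fst z) + sqrt (2 * \<eta>) * snd z i) {..<d})
      \<in> measurable (RdM d \<Otimes>\<^sub>M gaussM d) (RdM d)"
    unfolding RdM_def[of d] using coordinate by (intro measurable_restrict) (simp add: RdM_def)
  moreover have "(\<lambda>(x, \<xi>). lmc_step d \<eta> U x \<xi>)
      = (\<lambda>z. restrict (\<lambda>i. fst z i - \<eta> * pdk d U [i] (fst z) + sqrt (2 * \<eta>) * snd z i) {..<d})"
    by (auto simp: fun_eq_iff lmc_step_def grad_def)
  ultimately show ?thesis by simp
qed

lemma lmc_stationary_fourth_moment_le:
  fixes \<rho> K :: real
  assumes stationary: "lmc_stationary d \<eta> U \<pi>" and "C5_on_Rd d U"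
    and "0 \<le> \<rho>" and "\<rho> < 1" and "0 \<le> K"
    and drift: "\<And>x \<xi>. x \<in> Rd d \<Longrightarrow> (vnorm d (lmc_step d \<eta> U x \<xi>)) ^ 4 + 1
                  \<le> \<rho> * ((vnorm d x) ^ 4 + 1) + (K * (\<Sum>i<d. (\<xi> i) ^ 4) + 1)"
  shows "(\<integral>\<^sup>+ x. ennreal ((vnorm d x) ^ 4 + 1) \<partial>\<pi>) \<le> ennreal ((3 * K * real d + 1) / (1 - \<rho>))"
proof -
  let ?f = "\<lambda>(x, \<xi>). lmc_step d \<eta> U x \<xi>"
  have "prob_space \<pi>" and sets: "sets \<pi> = sets (RdM d)"
    and invariant: "distr (\<pi> \<Otimes>\<^sub>M gaussM d) (RdM d) ?f = \<pi>"
    using stationary unfolding lmc_stationary_def by auto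
  have "?f \<in> measurable (\<pi> \<Otimes>\<^sub>M gaussM d) \<pi>"
    using measurable_lmc_step[OF \<open>C5_on_Rd d U\<close>]
    by (simp add: measurable_cong_sets[OF sets_pair_measure_cong[OF sets refl] sets])
  moreover have "distr (\<pi> \<Otimes>\<^sub>M gaussM d) \<pi> ?f = \<pi>"
    using invariant sets by (metis distr_cong)
  moreover have "(\<lambda>x. (vnorm d x) ^ 4 + 1) \<in> borel_measurable \<pi>"
    using borel_measurable_vnorm[of d] by (simp add: measurable_cong_sets[OF sets refl])
  moreover have "(\<lambda>\<xi>. K * (\<Sum>i<d. (\<xi> i) ^ 4) + 1) \<in> borel_measurable (gaussM d)"
    unfolding gaussM_def by measurable
  moreover have "space \<pi> = Rd d"
    using sets_eq_imp_space_eq[OF sets] by (simp add: space_RdM)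
  ultimately have "(\<integral>\<^sup>+ x. min ((vnorm d x) ^ 4 + 1) (real n) \<partial>\<pi>)
      \<le> (\<integral>\<^sup>+ x. min (\<rho> * ((vnorm d x) ^ 4 + 1)) (real n) \<partial>\<pi>) + ennreal (3 * K * real d + 1)" for n
    using \<open>prob_space \<pi>\<close> prob_space_gaussM drift \<open>0 \<le> \<rho>\<close> \<open>0 \<le> K\<close> nn_integral_gaussM_fourth_moments
    by (intro stationary_truncated_drift[where W = "\<lambda>\<xi>. K * (\<Sum>i<d. (\<xi> i) ^ 4) + 1"])
      (auto simp: sum_nonneg)
  then show ?thesis
    using \<open>prob_space \<pi>\<close> \<open>(\<lambda>x. (vnorm d x) ^ 4 + 1) \<in> borel_measurable \<pi>\<close> \<open>0 \<le> \<rho>\<close> \<open>\<rho> < 1\<close>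
    by (intro nn_integral_le_of_truncated_contraction) (auto simp: prob_space.finite_measure)
qed

lemma lmc_stationary_fourth_moment_le_square_dim:
  assumes P: "lmc_potential d \<alpha> \<beta> M U" and stationary: "lmc_stationary d \<eta> U \<pi>" and "1 \<le> d"
    and "0 \<le> \<alpha>" and "\<alpha> \<le> \<beta>" and "0 < \<beta>" and "0 \<le> \<eta>" and "0 < c"
  defines "\<rho> \<equiv> (1 + c) ^ 3 * (lmc_contraction \<alpha> \<beta> \<eta>)\<^sup>2"
    and "K \<equiv> (1 + 1 / c) ^ 3 * (2 * \<eta>)\<^sup>2"
  assumes "\<rho> < 1"
  shows "(\<integral>\<^sup>+ x. ennreal ((vnorm d x) ^ 4 + 1) \<partial>\<pi>) \<le> ennreal ((3 * K + 1) / (1 - \<rho>) * (real d)\<^sup>2)"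
proof -
  have "0 \<le> \<rho>" "0 \<le> K"
    using \<open>0 < c\<close> by (simp_all add: \<rho>_def K_def)
  have "(vnorm d (lmc_step d \<eta> U x \<xi>)) ^ 4 + 1
      \<le> \<rho> * ((vnorm d x) ^ 4 + 1) + ((K * real d) * (\<Sum>i<d. (\<xi> i) ^ 4) + 1)"
    if "x \<in> Rd d" for x \<xi>
    using lmc_step_fourth_power_drift[OF P that assms(4-8)]
    by (simp add: \<rho>_def K_def mult.assoc)
  then have "(\<integral>\<^sup>+ x. ennreal ((vnorm d x) ^ 4 + 1) \<partial>\<pi>) \<le> ennreal ((3 * (K * real d) * real d + 1) / (1 - \<rho>))"
    using P \<open>0 \<le> \<rho>\<close> \<open>\<rho> < 1\<close> \<open>0 \<le> K\<close>
    by (intro lmc_stationary_fourth_moment_le[OF stationary]) (auto simp: lmc_potential_def)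
  also have "\<dots> \<le> ennreal ((3 * K + 1) / (1 - \<rho>) * (real d)\<^sup>2)"
  proof (intro ennreal_leI)
    have "3 * (K * real d) * real d + 1 \<le> (3 * K + 1) * (real d)\<^sup>2"
      using \<open>1 \<le> d\<close> one_le_power[of "real d" 2] by (simp add: power2_eq_square algebra_simps)
    then show "(3 * (K * real d) * real d + 1) / (1 - \<rho>) \<le> (3 * K + 1) / (1 - \<rho>) * (real d)\<^sup>2"
      using \<open>\<rho> < 1\<close> by (simp add: divide_right_mono)
  qed
  finally show ?thesis .
qed

theorem lemma3p7:
  fixes \<alpha> \<beta> \<eta> :: real
  assumes "0 < \<alpha>" and "\<alpha> \<le> \<beta>" and "0 < \<eta>" and "\<eta> < \<alpha> / (2 * \<beta>\<^sup>2)"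
  shows "\<exists>C>0. \<forall>(d::nat) (M::real) (U::(nat \<Rightarrow> real) \<Rightarrow> real) (\<pi>::(nat \<Rightarrow> real) measure).
           1 \<le> d \<and> lmc_potential d \<alpha> \<beta> M U \<and> lmc_stationary d \<eta> U \<pi> \<longrightarrow>
           (\<integral>\<^sup>+ x. ennreal ((vnorm d x) ^ 4 + 1) \<partial>\<pi>) \<le> ennreal (C * (real d)\<^sup>2)"
proof -
  have "0 < \<beta>" using assms by simp
  then have "\<eta> * \<beta>\<^sup>2 < 2 * \<alpha>"
    using assms by (simp add: field_simps)
  then obtain c where "0 < c" and contracting: "(1 + c) ^ 3 * (lmc_contraction \<alpha> \<beta> \<eta>)\<^sup>2 < 1"
    using ex_pos_cube_times_square_lt_one lmc_contraction_nonneg lmc_contraction_less_one assms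
    by (metis less_imp_le)
  define \<rho> where "\<rho> = (1 + c) ^ 3 * (lmc_contraction \<alpha> \<beta> \<eta>)\<^sup>2"
  define K where "K = (1 + 1 / c) ^ 3 * (2 * \<eta>)\<^sup>2"
  show ?thesis
  proof (intro exI[of _ "(3 * K + 1) / (1 - \<rho>)"] conjI allI impI)
    have "0 \<le> K" using \<open>0 < c\<close> by (simp add: K_def)
    then show "0 < (3 * K + 1) / (1 - \<rho>)"
      using contracting by (simp add: \<rho>_def)
    fix d M U \<pi>
    assume "1 \<le> d \<and> lmc_potential d \<alpha> \<beta> M U \<and> lmc_stationary d \<eta> U \<pi>"
    then show "(\<integral>\<^sup>+ x. ennreal ((vnorm d x) ^ 4 + 1) \<partial>\<pi>) \<le> ennreal ((3 * K + 1) / (1 - \<rho>) * (real d)\<^sup>2)"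
      using assms \<open>0 < \<beta>\<close> \<open>0 < c\<close> contracting unfolding \<rho>_def K_def
      by (intro lmc_stationary_fourth_moment_le_square_dim) auto
  qed
qed

end
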